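(* Let $\Sigma=(X,\mathcal U,\phi)$ be a forward complete control system which has the CEP property. If $\Sigma$ is norm-to-integral ISS, then $\Sigma$ is uniformly locally stable (ULS).
   Context: Let $X$, $U$ be Banach spaces and let $\mathcal U$ be a normed vector space of functions $\mathbb R_+\to U$ satisfying: (shift invariance) for all $u\in\mathcal U$ and $\tau\ge0$, $u(\cdot+\tau)\in\mathcal U$ and $\|u(\cdot+\tau)\|_{\mathcal U}\le\|u\|_{\mathcal U}$; (concatenation) for all $u_1,u_2\in\mathcal U$ and $t>0$ the function equal to $u_1(\tau)$ for $\tau\in[0,t]$ and to $u_2(\tau-t)$ for $\tau>t$ belongs to $\mathcal U$. A forward complete control system is a triple $\Sigma=(X,\mathcal U,\phi)$ with $\phi:\mathbb R_+\times X\times\mathcal U\to X$ such that: $\phi(0,x,u)=x$; (causality) $\phi(t,x,u)=\phi(t,x,\tilde u)$ whenever $u|_{[0,t]}=\tilde u|_{[0,t]}$; for each $(x,u)$ the map $t\mapsto\phi(t,x,u)$ is continuous; (cocycle) $\phi(h,\phi(t,x,u),u(t+\cdot))=\phi(t+h,x,u)$ for all $t,h\ge0$, $x\in X$, $u\in\mathcal U$. Comparison functions: $\mathcal K$ = continuous strictly increasing $\gamma:\mathbb R_+\to\mathbb R_+$ with $\gamma(0)=0$; $\mathcal K_\infty$ = unbounded functions in $\mathcal K$. $\Sigma$ has the CEP property (continuity at the equilibrium point) if $\phi(t,0,0)=0$ for all $t\ge0$ and for every $\varepsilon>0$ and $h>0$ there is $\delta>0$ such that $t\in[0,h]$, $\|x\|_X\le\delta$,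 $\|u\|_{\mathcal U}\le\delta$ imply $\|\phi(t,x,u)\|_X\le\varepsilon$. $\Sigma$ is ULS if there exist $\sigma,\gamma\in\mathcal K_\infty$ and $r>0$ such that $\|\phi(t,x,u)\|_X\le\sigma(\|x\|_X)+\gamma(\|u\|_{\mathcal U})$ for all $t\ge0$, all $\|x\|_X\le r$ and all $\|u\|_{\mathcal U}\le r$. $\Sigma$ is norm-to-integral ISS if there are $\alpha\in\mathcal K$, $\psi,\sigma\in\mathcal K_\infty$ with $\int_0^t\alpha(\|\phi(s,x,u)\|_X)\,ds\le\psi(\|x\|_X)+t\,\sigma(\|u\|_{\mathcal U})$ for all $x\in X$, $u\in\mathcal U$, $t\ge0$. *)

theory Defs
  imports "HOL-Analysis.Analysis"
begin

definition class_K :: "(real \<Rightarrow> real) \<Rightarrow> bool" where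
  "class_K \<gamma> \<longleftrightarrow> continuous_on {0..} \<gamma> \<and> strict_mono_on {0..} \<gamma> \<and> \<gamma> 0 = 0
     \<and> (\<forall>s\<ge>0. \<gamma> s \<ge> 0)"

definition class_Kinf :: "(real \<Rightarrow> real) \<Rightarrow> bool" where
  "class_Kinf \<gamma> \<longleftrightarrow> class_K \<gamma> \<and> (\<forall>M. \<exists>s\<ge>0. \<gamma> s > M)"

text \<open>Functions R+ -> U are represented by functions real => 'u that vanish
  on the negative reals (canonical representatives).\<close>

definition shift_input :: "(real \<Rightarrow> 'u::zero) \<Rightarrow> real \<Rightarrow> (real \<Rightarrow> 'u)" where
  "shift_input u \<tau> = (\<lambda>s. if s < 0 then 0 else u (s + \<tau>))"

definition concat_input :: "(real \<Rightarrow> 'u::zero) \<Rightarrow> (real \<Rightarrow> 'u) \<Rightarrow> real \<Rightarrow> (real \<Rightarrow> 'u)" where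
  "concat_input u1 u2 t = (\<lambda>s. if s < 0 then 0 else if s \<le> t then u1 s else u2 (s - t))"

definition input_space :: "(real \<Rightarrow> 'u::real_normed_vector) set \<Rightarrow> ((real \<Rightarrow> 'u) \<Rightarrow> real) \<Rightarrow> bool" where
  "input_space Uc nU \<longleftrightarrow>
     (\<forall>u\<in>Uc. \<forall>s<0. u s = 0) \<and>
     (\<lambda>_. 0) \<in> Uc \<and>
     (\<forall>u\<in>Uc. \<forall>v\<in>Uc. (\<lambda>s. u s + v s) \<in> Uc) \<and>
     (\<forall>u\<in>Uc. \<forall>c::real. (\<lambda>s. c *\<^sub>R u s) \<in> Uc) \<and>
     (\<forall>u\<in>Uc. nU u \<ge> 0) \<and>
     (\<forall>u\<in>Uc. nU u = 0 \<longleftrightarrow> u = (\<lambda>_. 0)) \<and>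
     (\<forall>u\<in>Uc. \<forall>c::real. nU (\<lambda>s. c *\<^sub>R u s) = \<bar>c\<bar> * nU u) \<and>
     (\<forall>u\<in>Uc. \<forall>v\<in>Uc. nU (\<lambda>s. u s + v s) \<le> nU u + nU v) \<and>
     (\<forall>u\<in>Uc. \<forall>\<tau>\<ge>0. shift_input u \<tau> \<in> Uc \<and> nU (shift_input u \<tau>) \<le> nU u) \<and>
     (\<forall>u1\<in>Uc. \<forall>u2\<in>Uc. \<forall>t>0. concat_input u1 u2 t \<in> Uc)"

definition forward_complete_system ::
  "(real \<Rightarrow> 'u::real_normed_vector) set \<Rightarrow> ((real \<Rightarrow> 'u) \<Rightarrow> real)
     \<Rightarrow> (real \<Rightarrow> 'x::real_normed_vector \<Rightarrow> (real \<Rightarrow> 'u) \<Rightarrow> 'x) \<Rightarrow> bool" where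
  "forward_complete_system Uc nU \<phi> \<longleftrightarrow>
     input_space Uc nU \<and>
     (\<forall>x. \<forall>u\<in>Uc. \<phi> 0 x u = x) \<and>
     (\<forall>t\<ge>0. \<forall>x. \<forall>u\<in>Uc. \<forall>v\<in>Uc. (\<forall>s\<in>{0..t}. u s = v s) \<longrightarrow> \<phi> t x u = \<phi> t x v) \<and>
     (\<forall>x. \<forall>u\<in>Uc. continuous_on {0..} (\<lambda>t. \<phi> t x u)) \<and>
     (\<forall>t\<ge>0. \<forall>h\<ge>0. \<forall>x. \<forall>u\<in>Uc. \<phi> h (\<phi> t x u) (shift_input u t) = \<phi> (t + h) x u)"

definition CEP ::
  "(real \<Rightarrow> 'u::real_normed_vector) set \<Rightarrow> ((real \<Rightarrow> 'u) \<Rightarrow> real)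
     \<Rightarrow> (real \<Rightarrow> 'x::real_normed_vector \<Rightarrow> (real \<Rightarrow> 'u) \<Rightarrow> 'x) \<Rightarrow> bool" where
  "CEP Uc nU \<phi> \<longleftrightarrow>
     (\<forall>t\<ge>0. \<phi> t 0 (\<lambda>_. 0) = 0) \<and>
     (\<forall>\<epsilon>>0. \<forall>h>0. \<exists>\<delta>>0. \<forall>t\<in>{0..h}. \<forall>x. \<forall>u\<in>Uc.
        norm x \<le> \<delta> \<and> nU u \<le> \<delta> \<longrightarrow> norm (\<phi> t x u) \<le> \<epsilon>)"

definition ULS ::
  "(real \<Rightarrow> 'u::real_normed_vector) set \<Rightarrow> ((real \<Rightarrow> 'u) \<Rightarrow> real)
     \<Rightarrow> (real \<Rightarrow> 'x::real_normed_vector \<Rightarrow> (real \<Rightarrow> 'u) \<Rightarrow> 'x) \<Rightarrow> bool" where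
  "ULS Uc nU \<phi> \<longleftrightarrow>
     (\<exists>\<sigma> \<gamma> r. class_Kinf \<sigma> \<and> class_Kinf \<gamma> \<and> r > 0 \<and>
        (\<forall>t\<ge>0. \<forall>x. \<forall>u\<in>Uc. norm x \<le> r \<and> nU u \<le> r \<longrightarrow>
           norm (\<phi> t x u) \<le> \<sigma> (norm x) + \<gamma> (nU u)))"

definition norm_to_integral_ISS ::
  "(real \<Rightarrow> 'u::real_normed_vector) set \<Rightarrow> ((real \<Rightarrow> 'u) \<Rightarrow> real)
     \<Rightarrow> (real \<Rightarrow> 'x::real_normed_vector \<Rightarrow> (real \<Rightarrow> 'u) \<Rightarrow> 'x) \<Rightarrow> bool" where
  "norm_to_integral_ISS Uc nU \<phi> \<longleftrightarrow>
     (\<exists>\<alpha> \<psi> \<sigma>. class_K \<alpha> \<and> class_Kinf \<psi> \<and> class_Kinf \<sigma> \<and>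
        (\<forall>x. \<forall>u\<in>Uc. \<forall>t\<ge>0.
           integral {0..t} (\<lambda>s. \<alpha> (norm (\<phi> s x u))) \<le> \<psi> (norm x) + t * \<sigma> (nU u)))"

end

theory Submission
  imports Defs
begin

text \<open>
  Fix \<open>\<epsilon> > 0\<close> and let \<open>\<delta>\<^sub>1\<close> be the CEP radius for \<open>\<epsilon>\<close> on the horizon \<open>[0, 1]\<close>. Start from
  a small state with a small input and suppose the trajectory leaves the \<open>\<epsilon>\<close>-ball at time \<open>t\<close>.
  Restart it at the last time before \<open>t\<close> at which it lies in a smaller ball of radius \<open>\<delta>\<^sub>2\<close>.
  By CEP the remaining excursion lasts longer than one time unit and stays outside the
  \<open>\<delta>\<^sub>1\<close>-ball during its final unit, so its integral of \<open>\<alpha>(|\<phi>|)\<close> is at least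
  \<open>(T - 1) \<alpha>(\<delta>\<^sub>2) + \<alpha>(\<delta>\<^sub>1)\<close>; for \<open>\<delta>\<^sub>2\<close> and the input bound \<open>\<delta>\<close> small enough this
  contradicts the norm-to-integral estimate \<open>\<psi>(\<delta>\<^sub>2) + T \<sigma>(\<delta>)\<close>.
  This \<open>\<epsilon>\<close>-\<open>\<delta>\<close> stability, uniform in time, yields ULS: if \<open>\<eta>\<^sub>n\<close> is a radius for
  \<open>\<epsilon> = 2\<^sup>-\<^sup>n\<close>, then \<open>|\<phi>(t, x, u)| \<le> \<kappa>(|x|) + \<kappa>(|u|)\<close> for any \<open>\<K>\<^sub>\<infinity>\<close> function \<open>\<kappa>\<close> exceeding
  \<open>2\<^sup>-\<^sup>n\<close> on \<open>(\<eta>\<^sub>n\<^sub>+\<^sub>1, \<infinity>)\<close>, and such a \<open>\<kappa>\<close> is a convergent sum of scaled ramps.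
\<close>

definition uniformly_stable ::
  "(real \<Rightarrow> 'u::real_normed_vector) set \<Rightarrow> ((real \<Rightarrow> 'u) \<Rightarrow> real)
     \<Rightarrow> (real \<Rightarrow> 'x::real_normed_vector \<Rightarrow> (real \<Rightarrow> 'u) \<Rightarrow> 'x) \<Rightarrow> bool" where
  "uniformly_stable Uc nU \<phi> \<longleftrightarrow>
     (\<forall>\<epsilon>>0. \<exists>\<delta>>0. \<forall>t\<ge>0. \<forall>x. \<forall>u\<in>Uc. norm x \<le> \<delta> \<and> nU u \<le> \<delta> \<longrightarrow> norm (\<phi> t x u) \<le> \<epsilon>)"

lemma class_K_mono: "class_K \<gamma> \<Longrightarrow> 0 \<le> a \<Longrightarrow> a \<le> b \<Longrightarrow> \<gamma> a \<le> \<gamma> b"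
  unfolding class_K_def
  by (metis atLeast_iff order_le_less order_trans strict_mono_onD less_imp_le)

lemma class_K_pos: "class_K \<gamma> \<Longrightarrow> 0 < a \<Longrightarrow> 0 < \<gamma> a"
  unfolding class_K_def by (metis atLeast_iff order_refl less_imp_le strict_mono_onD)

lemma class_K_continuous: "class_K \<gamma> \<Longrightarrow> continuous_on {0..} \<gamma>"
  unfolding class_K_def by blast

lemma class_Kinf_class_K: "class_Kinf \<gamma> \<Longrightarrow> class_K \<gamma>"
  unfolding class_Kinf_def by blast

lemma class_K_small_argument:
  assumes "class_K \<gamma>" "0 < e" "0 < r"
  obtains d where "0 < d" "d \<le> r" "\<gamma> d < e"
proof -
  have "continuous_on {0..} \<gamma>" "\<gamma> 0 = 0"
    using assms(1) unfolding class_K_def by auto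
  then obtain c where c: "0 < c" "\<And>s. 0 \<le> s \<Longrightarrow> s < c \<Longrightarrow> \<gamma> s < e"
    using assms(2) unfolding continuous_on_iff
    by (metis atLeast_iff dist_real_def order_refl abs_of_nonneg diff_zero abs_less_iff)
  show thesis
    by (rule that[of "min r (c/2)"]) (use c assms(3) in auto)
qed

lemma input_spaceD:
  assumes "input_space Uc nU"
  shows input_space_norm_nonneg: "u \<in> Uc \<Longrightarrow> 0 \<le> nU u"
    and input_space_shift: "u \<in> Uc \<Longrightarrow> 0 \<le> \<tau> \<Longrightarrow> shift_input u \<tau> \<in> Uc"
    and input_space_shift_norm: "u \<in> Uc \<Longrightarrow> 0 \<le> \<tau> \<Longrightarrow> nU (shift_input u \<tau>) \<le> nU u"
  using assms unfolding input_space_def by blast+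

lemma forward_complete_systemD:
  assumes "forward_complete_system Uc nU \<phi>"
  shows forward_complete_input_space: "input_space Uc nU"
    and forward_complete_initial: "u \<in> Uc \<Longrightarrow> \<phi> 0 x u = x"
    and forward_complete_continuous: "u \<in> Uc \<Longrightarrow> continuous_on {0..} (\<lambda>t. \<phi> t x u)"
    and forward_complete_cocycle:
      "0 \<le> t \<Longrightarrow> 0 \<le> h \<Longrightarrow> u \<in> Uc \<Longrightarrow> \<phi> h (\<phi> t x u) (shift_input u t) = \<phi> (t + h) x u"
  using assms unfolding forward_complete_system_def by blast+

lemma continuous_on_last_time_in_cball:
  fixes f :: "real \<Rightarrow> 'a::real_normed_vector"
  assumes f: "continuous_on {0..t} f" and "0 \<le> t" "norm (f 0) \<le> r"
  obtains s where "0 \<le> s" "s \<le> t" "norm (f s) \<le> r" "\<And>s'. s < s' \<Longrightarrow> s' \<le> t \<Longrightarrow> r < norm (f s')"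
proof -
  define S where "S = {0..t} \<inter> f -` {y. norm y \<le> r}"
  have "closed S"
    unfolding S_def using f by (intro continuous_closed_preimage) (auto intro: closed_Collect_le continuous_intros)
  then have "compact S"
    by (metis S_def compact_Icc compact_Int_closed inf.absorb_iff2 inf_le1)
  moreover have "0 \<in> S"
    using assms by (auto simp: S_def)
  ultimately obtain s where s: "s \<in> S" and last: "\<And>s'. s' \<in> S \<Longrightarrow> s' \<le> s"
    using compact_attains_sup[of S] by blast
  have "r < norm (f s')" if "s < s'" "s' \<le> t" for s'
  proof (rule ccontr)
    assume "\<not> r < norm (f s')"
    then have "s' \<in> S" using s that by (auto simp: S_def)
    then show False using last that by force
  qed
  with s show thesis
    by (intro that[of s]) (auto simp: S_def)
qed

lemma integral_ge_const_left_open: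
  fixes f :: "real \<Rightarrow> real"
  assumes f: "continuous_on {a..b} f" and "a \<le> b" and ge: "\<And>s. a < s \<Longrightarrow> s \<le> b \<Longrightarrow> c \<le> f s"
  shows "(b - a) * c \<le> integral {a..b} f"
proof -
  define g where "g s = max c (f s)" for s
  have "integral {a..b} f = integral {a..b} g"
    by (rule integral_spike[of "{a}"]) (use ge in \<open>auto simp: g_def max_def\<close>)
  moreover have "integral {a..b} (\<lambda>_. c) \<le> integral {a..b} g"
    unfolding g_def using f by (intro integral_le integrable_continuous_interval continuous_intros) auto
  ultimately show ?thesis
    using \<open>a \<le> b\<close> by (simp add: mult.commute)
qed

lemma integral_class_K_norm_lower_bound:
  fixes f :: "real \<Rightarrow> 'a::real_normed_vector"
  assumes \<alpha>: "class_K \<alpha>" and f: "continuous_on {0..T} f" and "1 \<le> T" "0 \<le> a" "0 \<le> b"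
    and above_a: "\<And>s. 0 < s \<Longrightarrow> s \<le> T \<Longrightarrow> a \<le> norm (f s)"
    and above_b: "\<And>s. T - 1 \<le> s \<Longrightarrow> s \<le> T \<Longrightarrow> b \<le> norm (f s)"
  shows "(T - 1) * \<alpha> a + \<alpha> b \<le> integral {0..T} (\<lambda>s. \<alpha> (norm (f s)))"
proof -
  define g where "g = (\<lambda>s. \<alpha> (norm (f s)))"
  have g: "continuous_on {0..T} g"
    unfolding g_def using continuous_on_norm[OF f]
    by (rule continuous_on_compose2[OF class_K_continuous[OF \<alpha>]]) auto
  have "(T - 1 - 0) * \<alpha> a \<le> integral {0..T-1} g"
    using \<open>1 \<le> T\<close> above_a class_K_mono[OF \<alpha> \<open>0 \<le> a\<close>]
    by (intro integral_ge_const_left_open continuous_on_subset[OF g]) (auto simp: g_def)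
  moreover have "(T - (T - 1)) * \<alpha> b \<le> integral {T-1..T} g"
    using \<open>1 \<le> T\<close> above_b class_K_mono[OF \<alpha> \<open>0 \<le> b\<close>]
    by (intro integral_ge_const_left_open continuous_on_subset[OF g]) (auto simp: g_def)
  moreover have "integral {0..T} g = integral {0..T-1} g + integral {T-1..T} g"
    using Henstock_Kurzweil_Integration.integral_combine[of 0 "T-1" T g]
      \<open>1 \<le> T\<close> integrable_continuous_interval[OF g] by simp
  ultimately show ?thesis
    unfolding g_def by simp
qed

lemma bound_from_small_intermediate_state:
  assumes fc: "forward_complete_system Uc nU \<phi>"
    and C: "\<And>\<tau> y v. 0 \<le> \<tau> \<Longrightarrow> \<tau> \<le> h \<Longrightarrow> v \<in> Uc \<Longrightarrow> norm y \<le> \<delta> \<Longrightarrow> nU v \<le> \<delta> \<Longrightarrow> norm (\<phi> \<tau> y v) \<le> \<epsilon>"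
    and u: "u \<in> Uc" "nU u \<le> \<delta>"
    and "0 \<le> s" "s \<le> t" "t \<le> s + h" "norm (\<phi> s x u) \<le> \<delta>"
  shows "norm (\<phi> t x u) \<le> \<epsilon>"
proof -
  have IS: "input_space Uc nU" by (rule forward_complete_input_space[OF fc])
  have "\<phi> t x u = \<phi> (t - s) (\<phi> s x u) (shift_input u s)"
    using forward_complete_cocycle[OF fc \<open>0 \<le> s\<close> _ u(1), of "t - s"] \<open>s \<le> t\<close> by simp
  moreover have "nU (shift_input u s) \<le> \<delta>"
    using input_space_shift_norm[OF IS u(1) \<open>0 \<le> s\<close>] u(2) by linarith
  ultimately show ?thesis
    using assms C[of "t - s" "shift_input u s" "\<phi> s x u"] input_space_shift[OF IS u(1)] by auto
qed

lemma uniformly_stable_if_CEP_norm_to_integral_ISS: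
  assumes fc: "forward_complete_system Uc nU \<phi>"
    and cep: "CEP Uc nU \<phi>"
    and iss: "norm_to_integral_ISS Uc nU \<phi>"
  shows "uniformly_stable Uc nU \<phi>"
  unfolding uniformly_stable_def
proof (intro allI impI)
  fix \<epsilon> :: real assume "0 < \<epsilon>"
  obtain \<alpha> \<psi> \<sigma> where \<alpha>: "class_K \<alpha>" and \<psi>: "class_K \<psi>" and \<sigma>: "class_K \<sigma>"
    and integral_bound: "\<And>x u t. u \<in> Uc \<Longrightarrow> 0 \<le> t \<Longrightarrow>
      integral {0..t} (\<lambda>s. \<alpha> (norm (\<phi> s x u))) \<le> \<psi> (norm x) + t * \<sigma> (nU u)"
    using iss unfolding norm_to_integral_ISS_def by (meson class_Kinf_class_K)
  have IS: "input_space Uc nU"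
    by (rule forward_complete_input_space[OF fc])
  obtain \<delta>\<^sub>1 where "0 < \<delta>\<^sub>1" and CEP_unit: "\<And>\<tau> y v. 0 \<le> \<tau> \<Longrightarrow> \<tau> \<le> 1 \<Longrightarrow> v \<in> Uc \<Longrightarrow>
      norm y \<le> \<delta>\<^sub>1 \<Longrightarrow> nU v \<le> \<delta>\<^sub>1 \<Longrightarrow> norm (\<phi> \<tau> y v) \<le> \<epsilon>"
    using cep \<open>0 < \<epsilon>\<close> unfolding CEP_def by (metis atLeastAtMost_iff zero_less_one)
  obtain \<delta>\<^sub>2 where "0 < \<delta>\<^sub>2" "\<delta>\<^sub>2 \<le> \<delta>\<^sub>1" "\<psi> \<delta>\<^sub>2 < \<alpha> \<delta>\<^sub>1 / 2"
    using class_K_small_argument[OF \<psi> _ \<open>0 < \<delta>\<^sub>1\<close>, where e = "\<alpha> \<delta>\<^sub>1 / 2"] class_K_pos[OF \<alpha> \<open>0 < \<delta>\<^sub>1\<close>] by auto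
  obtain \<delta> where "0 < \<delta>" "\<delta> \<le> \<delta>\<^sub>2" "\<sigma> \<delta> < \<alpha> \<delta>\<^sub>2 / 2"
    using class_K_small_argument[OF \<sigma> _ \<open>0 < \<delta>\<^sub>2\<close>, where e = "\<alpha> \<delta>\<^sub>2 / 2"] class_K_pos[OF \<alpha> \<open>0 < \<delta>\<^sub>2\<close>] by auto
  have "norm (\<phi> t x u) \<le> \<epsilon>" if "0 \<le> t" "u \<in> Uc" "norm x \<le> \<delta>" "nU u \<le> \<delta>" for t x u
  proof (rule ccontr)
    assume far: "\<not> norm (\<phi> t x u) \<le> \<epsilon>"
    have "continuous_on {0..t} (\<lambda>s. \<phi> s x u)"
      using forward_complete_continuous[OF fc \<open>u \<in> Uc\<close>] by (rule continuous_on_subset) auto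
    then obtain s where "0 \<le> s" "s \<le> t" and near: "norm (\<phi> s x u) \<le> \<delta>\<^sub>2"
      and outside: "\<And>s'. s < s' \<Longrightarrow> s' \<le> t \<Longrightarrow> \<delta>\<^sub>2 < norm (\<phi> s' x u)"
      using continuous_on_last_time_in_cball[of t "\<lambda>s. \<phi> s x u" \<delta>\<^sub>2] \<open>0 \<le> t\<close> \<open>norm x \<le> \<delta>\<close> \<open>\<delta> \<le> \<delta>\<^sub>2\<close>
        forward_complete_initial[OF fc \<open>u \<in> Uc\<close>] by auto
    define T where "T = t - s"
    define y where "y = \<phi> s x u"
    define v where "v = shift_input u s"
    have v: "v \<in> Uc" "nU v \<le> \<delta>"
      using input_space_shift[OF IS \<open>u \<in> Uc\<close> \<open>0 \<le> s\<close>]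
        input_space_shift_norm[OF IS \<open>u \<in> Uc\<close> \<open>0 \<le> s\<close>] \<open>nU u \<le> \<delta>\<close>
      unfolding v_def by linarith+
    have restart: "\<phi> h y v = \<phi> (s + h) x u" if "0 \<le> h" for h
      using forward_complete_cocycle[OF fc \<open>0 \<le> s\<close> that \<open>u \<in> Uc\<close>] by (simp add: y_def v_def)
    have small_then_close: "norm (\<phi> t x u) \<le> \<epsilon>" if "s \<le> s'" "s' \<le> t" "t \<le> s' + 1" "norm (\<phi> s' x u) \<le> \<delta>\<^sub>1" for s'
      by (rule bound_from_small_intermediate_state[OF fc CEP_unit \<open>u \<in> Uc\<close>, where s = s'])
        (use that \<open>0 \<le> s\<close> \<open>s \<le> t\<close> \<open>nU u \<le> \<delta>\<close> \<open>\<delta> \<le> \<delta>\<^sub>2\<close> \<open>\<delta>\<^sub>2 \<le> \<delta>\<^sub>1\<close> in auto)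
    have "1 < T"
    proof (rule ccontr)
      assume "\<not> 1 < T"
      then show False
        using small_then_close[of s] near \<open>\<delta>\<^sub>2 \<le> \<delta>\<^sub>1\<close> \<open>s \<le> t\<close> far by (simp add: T_def)
    qed
    have "(T - 1) * \<alpha> \<delta>\<^sub>2 + \<alpha> \<delta>\<^sub>1 \<le> integral {0..T} (\<lambda>h. \<alpha> (norm (\<phi> h y v)))"
    proof (rule integral_class_K_norm_lower_bound[OF \<alpha>])
      show "continuous_on {0..T} (\<lambda>h. \<phi> h y v)"
        using forward_complete_continuous[OF fc v(1)] by (rule continuous_on_subset) auto
      show "\<delta>\<^sub>2 \<le> norm (\<phi> h y v)" if "0 < h" "h \<le> T" for h
        using outside[of "s + h"] restart[of h] that by (auto simp: T_def)
      show "\<delta>\<^sub>1 \<le> norm (\<phi> h y v)" if "T - 1 \<le> h" "h \<le> T" for h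
        using small_then_close[of "s + h"] restart[of h] that \<open>1 < T\<close> far by (force simp: T_def)
    qed (use \<open>1 < T\<close> \<open>0 < \<delta>\<^sub>1\<close> \<open>0 < \<delta>\<^sub>2\<close> in auto)
    also have "\<dots> \<le> \<psi> (norm y) + T * \<sigma> (nU v)"
      using integral_bound[OF v(1)] \<open>1 < T\<close> by simp
    also have "\<dots> \<le> \<psi> \<delta>\<^sub>2 + T * \<sigma> \<delta>"
      using class_K_mono[OF \<psi> _ near] class_K_mono[OF \<sigma> input_space_norm_nonneg[OF IS v(1)] v(2)]
        \<open>1 < T\<close> by (simp add: y_def add_mono)
    finally have "(T - 1) * \<alpha> \<delta>\<^sub>2 + \<alpha> \<delta>\<^sub>1 \<le> \<psi> \<delta>\<^sub>2 + T * \<sigma> \<delta>" .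
    moreover have "T * \<sigma> \<delta> \<le> T * (\<alpha> \<delta>\<^sub>2 / 2)"
      using \<open>\<sigma> \<delta> < \<alpha> \<delta>\<^sub>2 / 2\<close> \<open>1 < T\<close> by simp
    moreover have "\<alpha> \<delta>\<^sub>2 \<le> \<alpha> \<delta>\<^sub>1" "0 < (T - 1) * \<alpha> \<delta>\<^sub>2"
      using class_K_mono[OF \<alpha> _ \<open>\<delta>\<^sub>2 \<le> \<delta>\<^sub>1\<close>] class_K_pos[OF \<alpha> \<open>0 < \<delta>\<^sub>2\<close>] \<open>0 < \<delta>\<^sub>2\<close> \<open>1 < T\<close> by auto
    ultimately show False
      using \<open>\<psi> \<delta>\<^sub>2 < \<alpha> \<delta>\<^sub>1 / 2\<close> by (simp add: algebra_simps)
  qed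
  then show "\<exists>\<delta>>0. \<forall>t\<ge>0. \<forall>x. \<forall>u\<in>Uc. norm x \<le> \<delta> \<and> nU u \<le> \<delta> \<longrightarrow> norm (\<phi> t x u) \<le> \<epsilon>"
    using \<open>0 < \<delta>\<close> by blast
qed

lemma class_Kinf_dominating_steps:
  fixes d :: "nat \<Rightarrow> real"
  assumes d_pos: "\<And>n. 0 < d n"
  obtains \<kappa> where "class_Kinf \<kappa>" "\<And>s n. d (Suc n) < s \<Longrightarrow> (1/2) ^ n \<le> \<kappa> s"
proof -
  define g where "g n s = (1/2::real) ^ n * min 1 (s / d (Suc n))" for n s
  define \<kappa> where "\<kappa> s = s + (\<Sum>n. g n s)" for s
  have g_nonneg: "0 \<le> g n s" if "0 \<le> s" for n s
    using that d_pos[of "Suc n"] by (auto simp: g_def min_def)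
  have g_le: "norm (g n s) \<le> (1/2) ^ n" if "0 \<le> s" for n s
    using that d_pos[of "Suc n"] by (auto simp: g_def abs_mult min_def)
  have g_mono: "g n s \<le> g n s'" if "0 \<le> s" "s \<le> s'" for n s s'
    using that d_pos[of "Suc n"] unfolding g_def
    by (intro mult_left_mono) (auto simp: min_def divide_right_mono)
  have geometric: "summable (\<lambda>n. (1/2::real) ^ n)"
    by simp
  have g_summable: "summable (\<lambda>n. g n s)" if "0 \<le> s" for s
    by (rule summable_comparison_test[OF _ geometric]) (use g_le that in auto)
  have "continuous_on {0..} (\<lambda>s. \<Sum>n. g n s)"
  proof (rule uniform_limit_theorem)
    show "uniform_limit {0..} (\<lambda>N s. \<Sum>n<N. g n s) (\<lambda>s. \<Sum>n. g n s) sequentially"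
      by (rule Weierstrass_m_test[OF _ geometric]) (use g_le in auto)
  qed (auto simp: g_def intro!: continuous_intros always_eventually d_pos less_imp_neq[symmetric])
  then have "continuous_on {0..} \<kappa>"
    unfolding \<kappa>_def by (intro continuous_intros)
  moreover have "strict_mono_on {0..} \<kappa>"
  proof (rule strict_mono_onI)
    fix s s' :: real assume "s \<in> {0..}" "s' \<in> {0..}" "s < s'"
    then have "(\<Sum>n. g n s) \<le> (\<Sum>n. g n s')"
      by (intro suminf_le g_summable g_mono) auto
    then show "\<kappa> s < \<kappa> s'"
      unfolding \<kappa>_def using \<open>s < s'\<close> by simp
  qed
  moreover have \<kappa>_ge: "s \<le> \<kappa> s" if "0 \<le> s" for s
    using suminf_nonneg[OF g_summable[OF that] g_nonneg[OF that]] by (simp add: \<kappa>_def)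
  moreover have "\<kappa> 0 = 0"
    by (simp add: \<kappa>_def g_def)
  moreover have "\<forall>s\<ge>0. 0 \<le> \<kappa> s"
    using \<kappa>_ge order_trans by blast
  moreover have "\<forall>M. \<exists>s\<ge>0. M < \<kappa> s"
    using \<kappa>_ge by (metis add_increasing2 less_add_one linorder_not_le max.cobounded1 max.cobounded2
        order_trans zero_le_one)
  ultimately have "class_Kinf \<kappa>"
    unfolding class_Kinf_def class_K_def by blast
  moreover have "(1/2) ^ n \<le> \<kappa> s" if "d (Suc n) < s" for s n
  proof -
    have "0 \<le> s"
      using d_pos[of "Suc n"] that by simp
    have "(1/2) ^ n = g n s"
      using that d_pos[of "Suc n"] by (simp add: g_def min_def)
    also have "\<dots> \<le> (\<Sum>n. g n s)"
      using sum_le_suminf[OF g_summable[OF \<open>0 \<le> s\<close>], of "{n}"] g_nonneg[OF \<open>0 \<le> s\<close>] by simp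
    also have "\<dots> \<le> \<kappa> s"
      using \<open>0 \<le> s\<close> by (simp add: \<kappa>_def)
    finally show ?thesis .
  qed
  ultimately show thesis
    using that by blast
qed

lemma crossing_index:
  fixes d :: "nat \<Rightarrow> real"
  assumes "m \<le> d 0" "d N < m"
  obtains n where "d (Suc n) < m" "m \<le> d n"
  using assms
proof (induction N)
  case (Suc N)
  then show ?case
    by (cases "m \<le> d N") auto
qed simp

lemma le_zero_if_le_powers_half:
  fixes a :: real
  assumes "\<And>n. a \<le> (1/2) ^ n"
  shows "a \<le> 0"
proof (rule ccontr)
  assume "\<not> a \<le> 0"
  then obtain n where "(1/2) ^ n < a"
    using real_arch_pow_inv[of a "1/2"] by auto
  with assms[of n] show False
    by simp
qed

lemma ULS_if_uniformly_stable:
  assumes nU_nonneg: "\<And>u. u \<in> Uc \<Longrightarrow> 0 \<le> nU u" and stable: "uniformly_stable Uc nU \<phi>"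
  shows "ULS Uc nU \<phi>"
proof -
  have "\<forall>n::nat. \<exists>\<delta>>0. \<forall>t\<ge>0. \<forall>x. \<forall>u\<in>Uc. norm x \<le> \<delta> \<and> nU u \<le> \<delta> \<longrightarrow> norm (\<phi> t x u) \<le> (1/2) ^ n"
    using stable unfolding uniformly_stable_def by simp
  then obtain \<delta> where \<delta>_pos: "\<And>n. 0 < \<delta> n"
    and \<delta>_bound: "\<And>n t x u. 0 \<le> t \<Longrightarrow> u \<in> Uc \<Longrightarrow> norm x \<le> \<delta> n \<Longrightarrow> nU u \<le> \<delta> n \<Longrightarrow>
      norm (\<phi> t x u) \<le> (1/2) ^ n"
    by metis
  define D where "D n = min (\<delta> n) ((1/2) ^ n)" for n
  have D_pos: "0 < D n" for n
    using \<delta>_pos[of n] by (simp add: D_def)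
  obtain \<kappa> where \<kappa>: "class_Kinf \<kappa>" and \<kappa>_steps: "\<And>s n. D (Suc n) < s \<Longrightarrow> (1/2) ^ n \<le> \<kappa> s"
    using class_Kinf_dominating_steps[of D, OF D_pos] by blast
  have \<kappa>_K: "class_K \<kappa>"
    by (rule class_Kinf_class_K[OF \<kappa>])
  have bound: "norm (\<phi> t x u) \<le> \<kappa> (norm x) + \<kappa> (nU u)"
    if "0 \<le> t" "u \<in> Uc" "norm x \<le> D 0" "nU u \<le> D 0" for t x u
  proof -
    define m where "m = max (norm x) (nU u)"
    have bound_if: "norm (\<phi> t x u) \<le> (1/2) ^ n" if "m \<le> D n" for n
      using \<delta>_bound[OF \<open>0 \<le> t\<close> \<open>u \<in> Uc\<close>, of x n] that by (simp add: m_def D_def)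
    have "norm (\<phi> t x u) \<le> \<kappa> m"
    proof (cases "m = 0")
      case True
      then have "norm (\<phi> t x u) \<le> 0"
        using le_zero_if_le_powers_half[of "norm (\<phi> t x u)"] bound_if True D_pos
        by (simp add: less_imp_le)
      then show ?thesis
        using True \<kappa>_K unfolding class_K_def by simp
    next
      case False
      moreover have "0 \<le> m"
        by (simp add: m_def le_max_iff_disj)
      ultimately have "0 < m"
        by simp
      then obtain N where "(1/2) ^ N < m"
        using real_arch_pow_inv[of m "1/2"] by auto
      then have "D N < m"
        by (simp add: D_def)
      moreover have "m \<le> D 0"
        using that by (simp add: m_def)
      ultimately obtain n where "D (Suc n) < m" "m \<le> D n"
        using crossing_index[of m D N] by blast
      then show ?thesis
        using bound_if \<kappa>_steps order_trans by blast
    qed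
    also have "\<kappa> m \<le> \<kappa> (norm x) + \<kappa> (nU u)"
      using \<kappa>_K nU_nonneg[OF \<open>u \<in> Uc\<close>] unfolding m_def class_K_def by (auto simp: max_def)
    finally show ?thesis .
  qed
  show ?thesis
    unfolding ULS_def
    by (rule exI[of _ \<kappa>], rule exI[of _ \<kappa>], rule exI[of _ "D 0"]) (use \<kappa> D_pos bound in auto)
qed

theorem mainTheorem2:
  fixes Uc :: "(real \<Rightarrow> 'u::banach) set"
    and nU :: "(real \<Rightarrow> 'u) \<Rightarrow> real"
    and \<phi> :: "real \<Rightarrow> 'x::banach \<Rightarrow> (real \<Rightarrow> 'u) \<Rightarrow> 'x"
  assumes "forward_complete_system Uc nU \<phi>"
    and "CEP Uc nU \<phi>"
    and "norm_to_integral_ISS Uc nU \<phi>"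
  shows "ULS Uc nU \<phi>"
proof (rule ULS_if_uniformly_stable)
  show "0 \<le> nU u" if "u \<in> Uc" for u
    using input_space_norm_nonneg[OF forward_complete_input_space[OF assms(1)] that] .
  show "uniformly_stable Uc nU \<phi>"
    using uniformly_stable_if_CEP_norm_to_integral_ISS[OF assms] .
qed

end
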